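(* Let $(X,d)$ be a compact metric space with $\dim X=0$. Then the identity map $\mathrm{id}_X$ is topologically stable.
   Context: $\mathcal{H}(X)$ is the set of homeomorphisms; $d_{C^0}(f,g)=\sup_x d(f(x),g(x))$; $D(f,g)=\max\{d_{C^0}(f,g),d_{C^0}(f^{-1},g^{-1})\}$. $f\in\mathcal{H}(X)$ is topologically stable if for every $\epsilon>0$ there is $\delta>0$ such that every $g\in\mathcal{H}(X)$ with $D(f,g)<\delta$ admits a continuous $h:X\to X$ with $d_{C^0}(h,\mathrm{id}_X)<\epsilon$ and $h\circ g=f\circ h$. *)

theory Defs
  imports "HOL-Analysis.Analysis"
begin

text \<open>The compact metric space is a compact subset X of a metric space type.\<close>

definition homeos :: "'a::metric_space set \<Rightarrow> ('a \<Rightarrow> 'a) set" where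
  "homeos X = {f. \<exists>g. homeomorphism X X f g}"

definition dC0 :: "'a::metric_space set \<Rightarrow> ('a \<Rightarrow> 'a) \<Rightarrow> ('a \<Rightarrow> 'a) \<Rightarrow> real" where
  "dC0 X f g = (SUP x\<in>X. dist (f x) (g x))"

definition homeo_dist :: "'a::metric_space set \<Rightarrow> ('a \<Rightarrow> 'a) \<Rightarrow> ('a \<Rightarrow> 'a) \<Rightarrow> real" where
  "homeo_dist X f g = max (dC0 X f g) (dC0 X (inv_into X f) (inv_into X g))"

definition topologically_stable :: "'a::metric_space set \<Rightarrow> ('a \<Rightarrow> 'a) \<Rightarrow> bool" where
  "topologically_stable X f \<longleftrightarrow>
     (\<forall>\<epsilon>>0. \<exists>\<delta>>0. \<forall>g\<in>homeos X. homeo_dist X f g < \<delta> \<longrightarrow>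
        (\<exists>h. continuous_on X h \<and> h ` X \<subseteq> X \<and> dC0 X h id < \<epsilon> \<and>
             (\<forall>x\<in>X. h (g x) = f (h x))))"

text \<open>Lebesgue covering dimension equal to 0: X nonempty and every finite open cover
  has a finite open refinement of order at most 1 (i.e. pairwise disjoint) covering X.\<close>

definition covering_dim_zero :: "'a::metric_space set \<Rightarrow> bool" where
  "covering_dim_zero X \<longleftrightarrow> X \<noteq> {} \<and>
     (\<forall>\<U>. finite \<U> \<and> (\<forall>U\<in>\<U>. openin (top_of_set X) U) \<and> X \<subseteq> \<Union>\<U> \<longrightarrow>
        (\<exists>\<V>. finite \<V> \<and> (\<forall>V\<in>\<V>. openin (top_of_set X) V) \<and> \<Union>\<V> = X \<and>
             (\<forall>V\<in>\<V>. \<exists>U\<in>\<U>. V \<subseteq> U) \<and> pairwise disjnt \<V>))"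

end

theory Submission
  imports Defs
begin

text \<open>Zero-dimensionality yields, for every \<open>\<epsilon>\<close>, a partition of \<open>X\<close> into relatively open sets of
  diameter less than \<open>\<epsilon>\<close>. Collapsing each cell to one of its points gives a continuous map \<open>h\<close>
  that is \<open>\<epsilon>\<close>-close to the identity. If \<open>\<delta>\<close> is a Lebesgue number of the partition, any \<open>g\<close> that
  is \<open>\<delta>\<close>-close to the identity keeps every point in its own cell, so \<open>h \<circ> g = h\<close>.\<close>

lemma dist_le_dC0:
  assumes "bounded X" "f ` X \<subseteq> X" "g ` X \<subseteq> X" "x \<in> X"
  shows "dist (f x) (g x) \<le> dC0 X f g"
proof -
  obtain e where "\<forall>x\<in>X. \<forall>y\<in>X. dist x y \<le> e"
    using assms(1) by (meson bounded_two_points)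
  then have "bdd_above ((\<lambda>x. dist (f x) (g x)) ` X)"
    using assms(2,3) by (intro bdd_aboveI[of _ e]) blast
  then show ?thesis
    unfolding dC0_def using assms(4) by (rule cSUP_upper2) simp
qed

lemma dC0_le:
  assumes "X \<noteq> {}" "\<And>x. x \<in> X \<Longrightarrow> dist (f x) (g x) \<le> c"
  shows "dC0 X f g \<le> c"
  unfolding dC0_def using assms by (intro cSUP_least) auto

lemma Lebesgue_number_openin:
  assumes "compact X" "\<And>v. v \<in> V \<Longrightarrow> openin (top_of_set X) v" "X \<subseteq> \<Union>V"
  obtains \<delta> where "\<delta> > 0" "\<And>x y. \<lbrakk>x \<in> X; y \<in> X; dist x y < \<delta>\<rbrakk> \<Longrightarrow> \<exists>v\<in>V. x \<in> v \<and> y \<in> v"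
proof -
  obtain T where T: "\<And>v. v \<in> V \<Longrightarrow> open (T v) \<and> v = X \<inter> T v"
    using assms(2) unfolding openin_open by metis
  have "X \<subseteq> \<Union>(T ` V)"
    using assms(3) T by blast
  then obtain \<delta> where "\<delta> > 0" and \<delta>: "\<And>x. x \<in> X \<Longrightarrow> \<exists>G\<in>T ` V. ball x \<delta> \<subseteq> G"
    using Heine_Borel_lemma[OF assms(1), of "T ` V"] T by blast
  show thesis
  proof (rule that[OF \<open>\<delta> > 0\<close>])
    fix x y assume "x \<in> X" "y \<in> X" "dist x y < \<delta>"
    then obtain v where "v \<in> V" "ball x \<delta> \<subseteq> T v"
      using \<delta> by blast
    moreover have "x \<in> ball x \<delta>" "y \<in> ball x \<delta>"
      using \<open>\<delta> > 0\<close> \<open>dist x y < \<delta>\<close> by auto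
    ultimately have "x \<in> X \<inter> T v" "y \<in> X \<inter> T v"
      using \<open>x \<in> X\<close> \<open>y \<in> X\<close> by auto
    then show "\<exists>v\<in>V. x \<in> v \<and> y \<in> v"
      using T \<open>v \<in> V\<close> by metis
  qed
qed

lemma covering_dim_zero_small_open_partition:
  assumes "compact X" "covering_dim_zero X" "\<epsilon> > 0"
  obtains V where "\<And>v. v \<in> V \<Longrightarrow> openin (top_of_set X) v" "\<Union>V = X" "pairwise disjnt V"
    "\<And>v x y. \<lbrakk>v \<in> V; x \<in> v; y \<in> v\<rbrakk> \<Longrightarrow> dist x y < \<epsilon>"
proof -
  obtain C where "C \<subseteq> X" "finite C" and C: "X \<subseteq> (\<Union>c\<in>C. ball c (\<epsilon>/2))"
    using compactE_image[OF assms(1), of X "\<lambda>c. ball c (\<epsilon>/2)"] assms(3) by force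
  define U where "U = (\<lambda>c. X \<inter> ball c (\<epsilon>/2)) ` C"
  have "finite U" "\<forall>u\<in>U. openin (top_of_set X) u" "X \<subseteq> \<Union>U"
    using \<open>finite C\<close> C by (auto simp: U_def openin_open_Int)
  then obtain V where V: "\<forall>v\<in>V. openin (top_of_set X) v" "\<Union>V = X" "pairwise disjnt V"
    and refines: "\<forall>v\<in>V. \<exists>u\<in>U. v \<subseteq> u"
    using assms(2) unfolding covering_dim_zero_def by blast
  have "dist x y < \<epsilon>" if "v \<in> V" "x \<in> v" "y \<in> v" for v x y
  proof -
    obtain c where "v \<subseteq> ball c (\<epsilon>/2)"
      using refines \<open>v \<in> V\<close> unfolding U_def by blast
    then have "dist x c < \<epsilon>/2" "dist c y < \<epsilon>/2"
      using \<open>x \<in> v\<close> \<open>y \<in> v\<close> by (auto simp: dist_commute)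
    then show "dist x y < \<epsilon>"
      using dist_triangle[of x y c] by linarith
  qed
  with V show thesis
    by (intro that) auto
qed

definition collapse :: "'a set set \<Rightarrow> 'a \<Rightarrow> 'a" where
  "collapse V x = (SOME p. \<exists>v\<in>V. x \<in> v \<and> p \<in> v)"

lemma collapse_eq_cell_representative:
  assumes "pairwise disjnt V" "v \<in> V" "x \<in> v"
  shows "collapse V x = (SOME p. p \<in> v)"
proof -
  have "(\<exists>w\<in>V. x \<in> w \<and> p \<in> w) \<longleftrightarrow> p \<in> v" for p
    using assms unfolding pairwise_def disjnt_def by blast
  then show ?thesis
    unfolding collapse_def by simp
qed

lemma collapse_in_cell:
  assumes "pairwise disjnt V" "v \<in> V" "x \<in> v"
  shows "collapse V x \<in> v"
  using collapse_eq_cell_representative[OF assms] assms(3) by (metis someI)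

lemma collapse_eq_same_cell:
  assumes "pairwise disjnt V" "v \<in> V" "x \<in> v" "y \<in> v"
  shows "collapse V x = collapse V y"
  using collapse_eq_cell_representative assms by metis

lemma continuous_on_collapse:
  fixes V :: "'a::metric_space set set"
  assumes "pairwise disjnt V" "\<And>v. v \<in> V \<Longrightarrow> openin (top_of_set X) v" "\<Union>V = X"
  shows "continuous_on X (collapse V)"
  unfolding continuous_on_iff
proof (intro ballI allI impI)
  fix x and e :: real assume "x \<in> X" "e > 0"
  then obtain v where "v \<in> V" "x \<in> v"
    using assms(3) by blast
  then obtain d where "d > 0" and d: "\<And>y. \<lbrakk>y \<in> X; dist y x < d\<rbrakk> \<Longrightarrow> y \<in> v"
    using assms(2) unfolding openin_euclidean_subtopology_iff by blast
  have "dist (collapse V y) (collapse V x) < e" if "y \<in> X" "dist y x < d" for y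
    using collapse_eq_same_cell[OF assms(1) \<open>v \<in> V\<close> d[OF that] \<open>x \<in> v\<close>] \<open>e > 0\<close> by simp
  then show "\<exists>d>0. \<forall>y\<in>X. dist y x < d \<longrightarrow> dist (collapse V y) (collapse V x) < e"
    using \<open>d > 0\<close> by blast
qed

theorem corollary1p4:
  fixes X :: "'a::metric_space set"
  assumes "compact X" and "covering_dim_zero X"
  shows "topologically_stable X id"
  unfolding topologically_stable_def
proof (intro allI impI)
  fix \<epsilon> :: real assume "\<epsilon> > 0"
  then obtain V where open_cells: "\<And>v. v \<in> V \<Longrightarrow> openin (top_of_set X) v"
    and "\<Union>V = X" and disj: "pairwise disjnt V"
    and small: "\<And>v x y. \<lbrakk>v \<in> V; x \<in> v; y \<in> v\<rbrakk> \<Longrightarrow> dist x y < \<epsilon>/2"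
    using covering_dim_zero_small_open_partition[OF assms, of "\<epsilon>/2"] by auto
  obtain \<delta> where "\<delta> > 0" and same_cell: "\<And>x y. \<lbrakk>x \<in> X; y \<in> X; dist x y < \<delta>\<rbrakk> \<Longrightarrow> \<exists>v\<in>V. x \<in> v \<and> y \<in> v"
    using Lebesgue_number_openin[OF assms(1) open_cells] \<open>\<Union>V = X\<close> by blast
  let ?h = "collapse V"
  have h_cell: "?h x \<in> v \<and> dist (?h x) x < \<epsilon>/2" if "v \<in> V" "x \<in> v" for v x
    using collapse_in_cell[OF disj that] small that by blast
  have "continuous_on X ?h"
    using continuous_on_collapse[OF disj open_cells \<open>\<Union>V = X\<close>] .
  moreover have "?h ` X \<subseteq> X"
    using h_cell \<open>\<Union>V = X\<close> by blast
  moreover have "dC0 X ?h id < \<epsilon>"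
  proof -
    have "X \<noteq> {}"
      using assms(2) by (simp add: covering_dim_zero_def)
    moreover have "dist (?h x) (id x) \<le> \<epsilon>/2" if "x \<in> X" for x
    proof -
      obtain v where "v \<in> V" "x \<in> v"
        using \<open>\<Union>V = X\<close> \<open>x \<in> X\<close> by blast
      then show ?thesis
        using h_cell[of v x] by simp
    qed
    ultimately have "dC0 X ?h id \<le> \<epsilon>/2"
      by (rule dC0_le)
    then show ?thesis
      using \<open>\<epsilon> > 0\<close> by linarith
  qed
  moreover have "?h (g x) = ?h x" if "g \<in> homeos X" "homeo_dist X id g < \<delta>" "x \<in> X" for g x
  proof -
    have "g ` X \<subseteq> X"
      using \<open>g \<in> homeos X\<close> unfolding homeos_def homeomorphism_def by blast
    then have "dist (id x) (g x) \<le> dC0 X id g"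
      using dist_le_dC0[OF compact_imp_bounded[OF assms(1)] _ _ \<open>x \<in> X\<close>, of id g] by simp
    also have "\<dots> < \<delta>"
      using \<open>homeo_dist X id g < \<delta>\<close> unfolding homeo_dist_def by linarith
    finally obtain v where "v \<in> V" "x \<in> v" "g x \<in> v"
      using same_cell[of x "g x"] \<open>x \<in> X\<close> \<open>g ` X \<subseteq> X\<close> by auto
    then show ?thesis
      using collapse_eq_same_cell[OF disj] by blast
  qed
  ultimately show "\<exists>\<delta>>0. \<forall>g\<in>homeos X. homeo_dist X id g < \<delta> \<longrightarrow>
      (\<exists>h. continuous_on X h \<and> h ` X \<subseteq> X \<and> dC0 X h id < \<epsilon> \<and> (\<forall>x\<in>X. h (g x) = id (h x)))"
    using \<open>\<delta> > 0\<close> by (intro exI[of _ \<delta>]) (simp add: exI[of _ ?h])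
qed

end
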